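(* Work in the Poincaré ball model of $\mathbb{H}^3$ with the notation $S(x)$, $H(x)$, $P_{4,3}(a)$ below. Fix an integer $n>4$ and let $a=a_n>\sqrt2$ be the (unique) value for which the faces of $P_{4,3}(a)$ meet at dihedral angle $2\pi/n$. Consider $b$ with $b>\sqrt3$ and $b>a$, so that $P_{4,3}(b)$ is a finite cube lying inside $P_{4,3}(a)$. For a face $F$ of $P_{4,3}(b)$ (lying on $S(be_i)$ for some signed coordinate vector $e_i$), let $F'$ be the image of $F$ under the hyperbolic reflection (sphere inversion) in the corresponding face $S(ae_i)$ of $P_{4,3}(a)$. Then $F$ and $F'$ are the bottom and top of a prism over a square whose four lateral faces are hyperbolic rectangles. There is a unique value of $b$ (in the range $b>\max(a,\sqrt3)$) for which these lateral rectangles are squares.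
   Context: For $x\in\mathbb{R}^3$ with $|x|>1$, $S(x)$ is the sphere centered at $x$ with radius $\sqrt{|x|^2-1}$; its intersection with the unit ball is a hyperbolic plane. $H(x)$ is the unbounded component of $\mathbb{R}^3\setminus S(x)$. For $a>1$, $P_{4,3}(a)$ is the intersection of the unit ball with $H(ax)$ for all $x\in\{(\pm1,0,0),(0,\pm1,0),(0,0,\pm1)\}$ (a generalized hyperbolic cube). For $a>\sqrt2$ adjacent faces meet at angle $\alpha$ with $\cos\alpha=1/(a^2-1)$. *)

theory Defs
  imports "HOL-Analysis.Analysis"
begin

type_synonym pt = "real^3"

definition coords :: "pt set" where
  "coords = {axis i 1 | i. True} \<union> {- axis i 1 | i. True}"

definition srad :: "pt \<Rightarrow> real" where
  "srad x = sqrt ((norm x)^2 - 1)"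

definition S :: "pt \<Rightarrow> pt set" where
  "S x = sphere x (srad x)"

text \<open>H(x): the unbounded component of R^3 minus S(x)
  (library notion: union of the unbounded components of the complement).\<close>
definition H :: "pt \<Rightarrow> pt set" where
  "H x = outside (S x)"

definition P43 :: "real \<Rightarrow> pt set" where
  "P43 a = ball 0 1 \<inter> (\<Inter>e\<in>coords. H (a *\<^sub>R e))"

definition refl :: "pt \<Rightarrow> pt \<Rightarrow> pt" where
  "refl x y = x + ((srad x)^2 / (norm (y - x))^2) *\<^sub>R (y - x)"

definition hdist :: "pt \<Rightarrow> pt \<Rightarrow> real" where
  "hdist x y = arcosh (1 + 2 * (norm (x - y))^2 / ((1 - (norm x)^2) * (1 - (norm y)^2)))"

definition cube_vertex :: "real \<Rightarrow> pt \<Rightarrow> bool" where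
  "cube_vertex b v \<longleftrightarrow> v \<in> closure (P43 b) \<and> v \<in> ball 0 1 \<and>
      card {e \<in> coords. v \<in> S (b *\<^sub>R e)} \<ge> 3"

definition lateral_faces_square :: "real \<Rightarrow> real \<Rightarrow> bool" where
  "lateral_faces_square a b \<longleftrightarrow>
     (\<forall>e\<in>coords. \<forall>v w.
        cube_vertex b v \<and> cube_vertex b w \<and> v \<noteq> w \<and>
        v \<in> S (b *\<^sub>R e) \<and> w \<in> S (b *\<^sub>R e) \<and>
        (\<exists>e'\<in>coords. e' \<noteq> e \<and> v \<in> S (b *\<^sub>R e') \<and> w \<in> S (b *\<^sub>R e')) \<longrightarrow>
        (let v' = refl (a *\<^sub>R e) v; w' = refl (a *\<^sub>R e) w in
           hdist v w = hdist w w' \<and> hdist w w' = hdist w' v' \<and>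
           hdist w' v' = hdist v' v))"

end

theory Submission
  imports Defs
begin

(* The vertices of P_{4,3}(b) are the eight points (+-t, +-t, +-t), where t is the smaller root of
   3 t^2 - 2 b t + 1 = 0, and two vertices on a common edge are at Euclidean distance 2t.
   Inversion in S(c) is a hyperbolic isometry, so the top edges of the prism have the same length
   as the bottom ones, and the hyperbolic distance from y to its mirror image is
   arcosh (1 + 2 p^2 / ((|c|^2 - 1) (1 - |y|^2)^2)), where p = |y|^2 + 1 - 2 c.y is the power
   of y with respect to S(c).  For a vertex on the face S(b e) and c = a e one finds p = 2t (b - a),
   so the lateral edges equal the base edges exactly when (b - a)^2 = a^2 - 1,
   i.e. b = a + sqrt (a^2 - 1). *)

lemma outside_sphere_eq:
  fixes c :: "'a::{real_normed_vector, perfect_space}"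
  assumes "0 < r"
  shows "outside (sphere c r) = - cball c r"
  using assms outside_frontier_eq_complement_closure[of "cball c r"] by simp

lemma srad_sq: "1 \<le> norm x \<Longrightarrow> (srad x)\<^sup>2 = (norm x)\<^sup>2 - 1"
  unfolding srad_def by simp

lemma norm_diff_sq: "(norm (x - c))\<^sup>2 = (norm x)\<^sup>2 - 2 * (c \<bullet> x) + (norm c)\<^sup>2"
  for x c :: "'a::real_inner"
  unfolding power2_norm_eq_inner by (simp add: inner_diff_left inner_diff_right inner_commute)

lemma mem_S_iff:
  assumes "1 < norm c"
  shows "x \<in> S c \<longleftrightarrow> (norm x)\<^sup>2 + 1 = 2 * (c \<bullet> x)"
proof -
  have "x \<in> S c \<longleftrightarrow> sqrt ((norm (x - c))\<^sup>2) = sqrt ((norm c)\<^sup>2 - 1)"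
    by (simp add: S_def srad_def dist_norm norm_minus_commute)
  then show ?thesis
    unfolding real_sqrt_eq_iff norm_diff_sq by auto
qed

lemma mem_H_iff:
  assumes "1 < norm c"
  shows "x \<in> H c \<longleftrightarrow> 2 * (c \<bullet> x) < (norm x)\<^sup>2 + 1"
proof -
  have "0 < srad c"
    using assms by (simp add: srad_def)
  then have "x \<in> H c \<longleftrightarrow> sqrt ((norm c)\<^sup>2 - 1) < sqrt ((norm (x - c))\<^sup>2)"
    by (simp add: H_def S_def outside_sphere_eq srad_def dist_norm norm_minus_commute not_le)
  then show ?thesis
    unfolding real_sqrt_less_iff norm_diff_sq by auto
qed

lemma refl_eq:
  assumes "1 < norm c"
  shows "refl c y = c + (((norm c)\<^sup>2 - 1) / (norm (y - c))\<^sup>2) *\<^sub>R (y - c)"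
  using assms by (simp add: refl_def srad_sq)

lemma one_minus_norm_refl:
  assumes "1 < norm c" "y \<noteq> c"
  shows "1 - (norm (refl c y))\<^sup>2 = ((norm c)\<^sup>2 - 1) / (norm (y - c))\<^sup>2 * (1 - (norm y)\<^sup>2)"
proof -
  define u where "u = y - c"
  define k where "k = ((norm c)\<^sup>2 - 1) / (norm u)\<^sup>2"
  have ku: "k * (norm u)\<^sup>2 = (norm c)\<^sup>2 - 1"
    using assms(2) by (simp add: k_def u_def)
  have "refl c y = c + k *\<^sub>R u"
    using assms(1) by (simp add: refl_eq k_def u_def)
  then have "(norm (refl c y))\<^sup>2 = (norm c)\<^sup>2 + 2 * k * (c \<bullet> u) + k * (k * (norm u)\<^sup>2)"
    unfolding power2_norm_eq_inner
    by (simp add: inner_add_left inner_add_right inner_commute algebra_simps power2_eq_square)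
  moreover have "(norm y)\<^sup>2 = (norm c)\<^sup>2 + 2 * (c \<bullet> u) + (norm u)\<^sup>2"
    unfolding u_def power2_norm_eq_inner
    by (simp add: inner_diff_left inner_diff_right inner_commute)
  ultimately show ?thesis
    unfolding u_def[symmetric] k_def[symmetric] by (simp add: algebra_simps ku)
qed

lemma norm_refl_diff:
  assumes "1 < norm c" "v \<noteq> c" "w \<noteq> c"
  shows "(norm (refl c v - refl c w))\<^sup>2
    = ((norm c)\<^sup>2 - 1)\<^sup>2 * (norm (v - w))\<^sup>2 / ((norm (v - c))\<^sup>2 * (norm (w - c))\<^sup>2)"
proof -
  define r where "r = (norm c)\<^sup>2 - 1"
  define u where "u = v - c"
  define z where "z = w - c"
  have "u \<noteq> 0" "z \<noteq> 0"
    using assms by (auto simp: u_def z_def)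
  have "refl c v = c + (r / (norm u)\<^sup>2) *\<^sub>R u" "refl c w = c + (r / (norm z)\<^sup>2) *\<^sub>R z"
    using assms(1) by (simp_all add: refl_eq r_def u_def z_def)
  then have "(norm (refl c v - refl c w))\<^sup>2
      = (r / (norm u)\<^sup>2)\<^sup>2 * (norm u)\<^sup>2 - 2 * (r / (norm u)\<^sup>2) * (r / (norm z)\<^sup>2) * (u \<bullet> z)
        + (r / (norm z)\<^sup>2)\<^sup>2 * (norm z)\<^sup>2"
    unfolding power2_norm_eq_inner
    by (simp add: inner_diff_left inner_diff_right inner_commute power2_eq_square)
  also have "\<dots> = r\<^sup>2 * ((norm u)\<^sup>2 - 2 * (u \<bullet> z) + (norm z)\<^sup>2) / ((norm u)\<^sup>2 * (norm z)\<^sup>2)"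
    using \<open>u \<noteq> 0\<close> \<open>z \<noteq> 0\<close> by (simp add: field_simps power2_eq_square)
  also have "(norm u)\<^sup>2 - 2 * (u \<bullet> z) + (norm z)\<^sup>2 = (norm (v - w))\<^sup>2"
    unfolding u_def z_def power2_norm_eq_inner
    by (simp add: inner_diff_left inner_diff_right inner_commute)
  finally show ?thesis
    unfolding r_def u_def z_def .
qed

lemma hdist_commute: "hdist x y = hdist y x"
  unfolding hdist_def by (simp add: norm_minus_commute mult.commute)

lemma hdist_refl:
  assumes "1 < norm c" "norm v < 1" "norm w < 1"
  shows "hdist (refl c v) (refl c w) = hdist v w"
proof -
  have "v \<noteq> c" "w \<noteq> c"
    using assms by auto
  define K where "K = ((norm c)\<^sup>2 - 1)\<^sup>2 / ((norm (v - c))\<^sup>2 * (norm (w - c))\<^sup>2)"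
  have "1 < (norm c)\<^sup>2"
    using assms(1) by (simp add: one_less_power)
  then have "K \<noteq> 0"
    using \<open>v \<noteq> c\<close> \<open>w \<noteq> c\<close> by (simp add: K_def)
  have "(norm (refl c v - refl c w))\<^sup>2 = K * (norm (v - w))\<^sup>2"
    using norm_refl_diff[OF assms(1) \<open>v \<noteq> c\<close> \<open>w \<noteq> c\<close>] by (simp add: K_def)
  moreover have "(1 - (norm (refl c v))\<^sup>2) * (1 - (norm (refl c w))\<^sup>2)
      = K * ((1 - (norm v)\<^sup>2) * (1 - (norm w)\<^sup>2))"
    unfolding one_minus_norm_refl[OF assms(1) \<open>v \<noteq> c\<close>] one_minus_norm_refl[OF assms(1) \<open>w \<noteq> c\<close>] K_def
    by (simp add: power2_eq_square)
  ultimately show ?thesis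
    unfolding hdist_def using \<open>K \<noteq> 0\<close> by (simp add: mult.assoc)
qed

lemma hdist_refl_self:
  assumes "1 < norm c" "norm y < 1"
  shows "hdist y (refl c y)
    = arcosh (1 + 2 * ((norm y)\<^sup>2 + 1 - 2 * (c \<bullet> y))\<^sup>2 / (((norm c)\<^sup>2 - 1) * (1 - (norm y)\<^sup>2)\<^sup>2))"
proof -
  have "y \<noteq> c"
    using assms by auto
  define r where "r = (norm c)\<^sup>2 - 1"
  define D where "D = (norm (y - c))\<^sup>2"
  define k where "k = r / D"
  have "r > 0" "D > 0"
    using assms \<open>y \<noteq> c\<close> by (auto simp: r_def D_def)
  have "y - refl c y = (1 - k) *\<^sub>R (y - c)"
    unfolding refl_eq[OF assms(1)] k_def r_def D_def by (simp add: algebra_simps)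
  then have dist: "(norm (y - refl c y))\<^sup>2 = (1 - k)\<^sup>2 * D"
    by (simp add: D_def power_mult_distrib)
  have norm: "1 - (norm (refl c y))\<^sup>2 = k * (1 - (norm y)\<^sup>2)"
    unfolding one_minus_norm_refl[OF assms(1) \<open>y \<noteq> c\<close>] k_def r_def D_def ..
  have power: "D - r = (norm y)\<^sup>2 + 1 - 2 * (c \<bullet> y)"
    unfolding D_def r_def norm_diff_sq by simp
  define Y where "Y = 1 - (norm y)\<^sup>2"
  have "Y > 0"
    using assms(2) by (simp add: Y_def abs_square_less_1)
  have "hdist y (refl c y) = arcosh (1 + 2 * ((1 - k)\<^sup>2 * D / (Y * (k * Y))))"
    unfolding hdist_def dist norm Y_def by simp
  also have "(1 - k)\<^sup>2 * D / (Y * (k * Y)) = (D - r)\<^sup>2 / (r * Y\<^sup>2)"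
    using \<open>r > 0\<close> \<open>D > 0\<close> \<open>Y > 0\<close> unfolding k_def
    by (simp add: field_simps power2_eq_square)
  finally show ?thesis
    unfolding power unfolding r_def Y_def by simp
qed

lemma arcosh_eq_iff_real:
  fixes x y :: real
  assumes "1 \<le> x" "1 \<le> y"
  shows "arcosh x = arcosh y \<longleftrightarrow> x = y"
  using assms by (metis cosh_arcosh_real)

lemma coords_iff: "e \<in> coords \<longleftrightarrow> (\<exists>i. e = axis i 1 \<or> e = - axis i 1)"
  unfolding coords_def by auto

lemma coords_cases:
  assumes "e \<in> coords"
  obtains i where "e = axis i 1" | i where "e = - axis i 1"
  using assms unfolding coords_iff by auto

lemma finite_coords: "finite coords"
proof -
  have "coords = range (\<lambda>i. axis i 1) \<union> range (\<lambda>i. - axis i 1)"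
    unfolding coords_def by auto
  then show ?thesis
    by (metis finite_UnI finite_imageI finite_class.finite_UNIV)
qed

lemma norm_coords: "e \<in> coords \<Longrightarrow> norm e = 1"
  by (elim coords_cases) auto

definition sign_axis :: "pt \<Rightarrow> 3 \<Rightarrow> pt" where
  "sign_axis v i = (if 0 \<le> v $ i then axis i 1 else - axis i 1)"

lemma sign_axis_in_coords: "sign_axis v i \<in> coords"
  unfolding sign_axis_def coords_iff by auto

lemma inner_sign_axis: "sign_axis v i \<bullet> v = \<bar>v $ i\<bar>"
  by (simp add: sign_axis_def inner_axis')

lemma inj_sign_axis: "inj (sign_axis v)"
proof (rule injI)
  fix i j
  assume eq: "sign_axis v i = sign_axis v j"
  have "sign_axis v i $ i \<noteq> 0"
    by (simp add: sign_axis_def)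
  then have "sign_axis v j $ i \<noteq> 0"
    unfolding eq .
  then show "i = j"
    by (auto simp: sign_axis_def axis_def split: if_splits)
qed

lemma coords_eq_sign_axis:
  assumes "e \<in> coords" "0 < e \<bullet> v"
  obtains i where "e = sign_axis v i" "\<bar>v $ i\<bar> = e \<bullet> v"
  using assms(1)
proof (cases rule: coords_cases)
  case (1 i)
  with assms(2) show ?thesis
    by (intro that[of i]) (auto simp: sign_axis_def inner_axis')
next
  case (2 i)
  with assms(2) show ?thesis
    by (intro that[of i]) (auto simp: sign_axis_def inner_axis')
qed

lemma norm_sq_if_abs_components_eq:
  fixes v :: "real ^ 'n" and t :: real
  assumes "\<forall>i. \<bar>v $ i\<bar> = t"
  shows "(norm v)\<^sup>2 = CARD('n) * t\<^sup>2"
proof -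
  have "(v $ i)\<^sup>2 = t\<^sup>2" for i
    using assms by (metis power2_abs)
  then have "(norm v)\<^sup>2 = (\<Sum>i\<in>(UNIV :: 'n set). t\<^sup>2)"
    unfolding power2_norm_eq_inner inner_vec_def by (simp add: power2_eq_square)
  then show ?thesis
    by simp
qed

lemma common_face_component:
  assumes "e \<in> coords" "e \<bullet> v = e \<bullet> w"
  obtains i where "v $ i = w $ i" "e = axis i 1 \<or> e = - axis i 1"
  using assms(1) by (cases rule: coords_cases) (use assms(2) in \<open>auto simp: inner_axis'\<close>)

locale finite_cube =
  fixes b :: real
  assumes sqrt3_less: "sqrt 3 < b"
begin

lemma one_less: "1 < b"
proof -
  have "(1::real) < sqrt 3"
    by (rule real_less_rsqrt) simp
  then show ?thesis
    using sqrt3_less by linarith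
qed

lemma three_less_sq: "3 < b\<^sup>2"
proof -
  have "sqrt 3 < sqrt (b\<^sup>2)"
    using sqrt3_less one_less by simp
  then show ?thesis
    by (simp only: real_sqrt_less_iff)
qed

(* The smaller root (b - sqrt (b^2 - 3)) / 3 of 3 t^2 - 2 b t + 1, written so that it is visibly
   positive; (t, t, t) lies on S (b e_i) exactly when t is a root. *)
definition vertex_coord :: real where
  "vertex_coord = 1 / (b + sqrt (b\<^sup>2 - 3))"

lemma vertex_coord_pos: "0 < vertex_coord"
  using one_less three_less_sq by (simp add: vertex_coord_def add_pos_nonneg)

lemma vertex_coord_root: "3 * vertex_coord\<^sup>2 + 1 = 2 * b * vertex_coord"
proof -
  define s where "s = sqrt (b\<^sup>2 - 3)"
  have "s\<^sup>2 = b\<^sup>2 - 3" "0 \<le> s"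
    using three_less_sq by (simp_all add: s_def)
  moreover have "b + s \<noteq> 0"
    using \<open>0 \<le> s\<close> one_less by linarith
  ultimately have "3 * (1 / (b + s))\<^sup>2 + 1 - 2 * b * (1 / (b + s)) = 0"
    by (simp add: field_simps) algebra
  then show ?thesis
    unfolding vertex_coord_def s_def[symmetric] by simp
qed

lemma vertex_coord_sq_less: "3 * vertex_coord\<^sup>2 < 1"
proof -
  define s where "s = sqrt (b\<^sup>2 - 3)"
  have "0 \<le> s"
    using three_less_sq by (simp add: s_def)
  then have "b\<^sup>2 \<le> (b + s)\<^sup>2"
    using one_less by (intro power_mono) auto
  then have "3 < (b + s)\<^sup>2"
    using three_less_sq by linarith
  then show ?thesis
    unfolding vertex_coord_def s_def[symmetric] by (simp add: power_divide divide_less_eq)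
qed

lemma vertex_coord_unique:
  assumes root: "3 * c\<^sup>2 + 1 = 2 * b * c" and small: "3 * c\<^sup>2 < 1"
  shows "c = vertex_coord"
proof (rule ccontr)
  let ?t = vertex_coord
  assume "c \<noteq> ?t"
  have "3 * (c + ?t) * (c - ?t) = 2 * b * (c - ?t)"
    using root vertex_coord_root by (simp add: algebra_simps power2_eq_square)
  then have "3 * (c + ?t) = 2 * b"
    using \<open>c \<noteq> ?t\<close> by simp
  then have "2 * b * c = 3 * c\<^sup>2 + 3 * c * ?t"
    by (metis distrib_left mult.commute mult.left_commute power2_eq_square)
  then have "3 * c * ?t = 1"
    using root by linarith
  then have "(3 * c\<^sup>2) * (3 * ?t\<^sup>2) = 1"
    by (metis mult.commute mult.left_commute power2_eq_square power_one)
  moreover have "(3 * c\<^sup>2) * (3 * ?t\<^sup>2) < 1 * 1"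
    using small vertex_coord_sq_less by (intro mult_strict_mono') auto
  ultimately show False
    by simp
qed

lemma norm_corner:
  fixes v :: pt
  assumes "\<forall>i. \<bar>v $ i\<bar> = vertex_coord"
  shows "(norm v)\<^sup>2 = 3 * vertex_coord\<^sup>2"
  using norm_sq_if_abs_components_eq[OF assms] by simp

lemma corner_in_ball:
  fixes v :: pt
  assumes "\<forall>i. \<bar>v $ i\<bar> = vertex_coord"
  shows "norm v < 1"
proof -
  have "(norm v)\<^sup>2 < 1"
    using norm_corner[OF assms] vertex_coord_sq_less by simp
  then show ?thesis
    by (simp add: abs_square_less_1)
qed

lemma mem_face_iff:
  assumes "e \<in> coords"
  shows "x \<in> S (b *\<^sub>R e) \<longleftrightarrow> (norm x)\<^sup>2 + 1 = 2 * b * (e \<bullet> x)"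
  using assms one_less by (simp add: mem_S_iff norm_coords mult.assoc)

lemma mem_face_iff_corner:
  assumes "\<forall>i. \<bar>v $ i\<bar> = vertex_coord" "e \<in> coords"
  shows "v \<in> S (b *\<^sub>R e) \<longleftrightarrow> e \<bullet> v = vertex_coord"
  using assms one_less by (auto simp: mem_face_iff norm_corner vertex_coord_root)

lemma inner_coords_le_corner:
  assumes "\<forall>i. \<bar>v $ i\<bar> = vertex_coord" "e \<in> coords"
  shows "e \<bullet> v \<le> vertex_coord"
  using assms(2)
proof (cases rule: coords_cases)
  case (1 i)
  then show ?thesis
    using assms(1) by (simp add: inner_axis') (metis abs_ge_self)
next
  case (2 i)
  then show ?thesis
    using assms(1) by (simp add: inner_axis') (metis abs_ge_minus_self)
qed

lemma scaleR_corner_in_P43: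
  assumes corner: "\<forall>i. \<bar>v $ i\<bar> = vertex_coord" and s: "0 \<le> s" "s < 1"
  shows "s *\<^sub>R v \<in> P43 b"
proof -
  let ?t = vertex_coord
  have "norm (s *\<^sub>R v) \<le> norm v"
    using s by (simp add: mult_left_le_one_le)
  then have "norm (s *\<^sub>R v) < 1"
    using corner_in_ball[OF corner] by linarith
  moreover have "s *\<^sub>R v \<in> H (b *\<^sub>R e)" if e: "e \<in> coords" for e
  proof -
    have "2 * ((b *\<^sub>R e) \<bullet> (s *\<^sub>R v)) = 2 * b * s * (e \<bullet> v)"
      by simp
    also have "\<dots> \<le> 2 * b * s * ?t"
      using inner_coords_le_corner[OF corner e] one_less s by (intro mult_left_mono) auto
    also have "\<dots> = s * (3 * ?t\<^sup>2 + 1)"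
      by (simp add: vertex_coord_root mult.commute mult.left_commute)
    also have "\<dots> = s\<^sup>2 * (3 * ?t\<^sup>2) + 1 - (1 - s) * (1 - 3 * ?t\<^sup>2 * s)"
      by (simp add: algebra_simps power2_eq_square)
    also have "\<dots> < s\<^sup>2 * (3 * ?t\<^sup>2) + 1"
      using s vertex_coord_sq_less mult_left_le[of s "3 * ?t\<^sup>2"] by simp
    also have "\<dots> = (norm (s *\<^sub>R v))\<^sup>2 + 1"
      using norm_corner[OF corner] by (simp add: power_mult_distrib)
    finally show ?thesis
      using e one_less by (simp add: mem_H_iff norm_coords)
  qed
  ultimately show ?thesis
    unfolding P43_def by auto
qed

lemma corner_in_closure_P43:
  assumes "\<forall>i. \<bar>v $ i\<bar> = vertex_coord"
  shows "v \<in> closure (P43 b)"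
proof -
  let ?s = "\<lambda>n. 1 + - inverse (real (Suc n))"
  have "(\<lambda>n. ?s n *\<^sub>R v) \<longlonglongrightarrow> v"
    using tendsto_scaleR[OF LIMSEQ_inverse_real_of_nat_add_minus tendsto_const, of 1 v] by simp
  moreover have "?s n *\<^sub>R v \<in> P43 b" for n
    by (rule scaleR_corner_in_P43[OF assms]) (auto simp: field_simps)
  ultimately show ?thesis
    unfolding closure_sequential by (intro exI[where x = "\<lambda>n. ?s n *\<^sub>R v"]) simp
qed

(* Every face sphere S (b e) through v satisfies e.v = (|v|^2 + 1) / (2 b) =: c, so three of them
   give |v_i| = c for all three coordinates. *)
lemma corner_if_cube_vertex:
  assumes "cube_vertex b v"
  shows "\<forall>i. \<bar>v $ i\<bar> = vertex_coord"
proof -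
  define c where "c = ((norm v)\<^sup>2 + 1) / (2 * b)"
  define A where "A = {e \<in> coords. v \<in> S (b *\<^sub>R e)}"
  define I where "I = {i. \<bar>v $ i\<bar> = c}"
  have "0 < c"
    using one_less by (simp add: c_def add_nonneg_pos)
  have inner_A: "e \<bullet> v = c" if "e \<in> A" for e
    using that one_less by (auto simp: A_def c_def mem_face_iff)
  have "A \<subseteq> sign_axis v ` I"
  proof
    fix e
    assume "e \<in> A"
    then have "e \<in> coords" "0 < e \<bullet> v"
      using inner_A \<open>0 < c\<close> by (auto simp: A_def)
    then obtain i where "e = sign_axis v i" "\<bar>v $ i\<bar> = e \<bullet> v"
      by (rule coords_eq_sign_axis)
    then show "e \<in> sign_axis v ` I"
      using inner_A[OF \<open>e \<in> A\<close>] by (auto simp: I_def)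
  qed
  then have "card A \<le> card I"
    using card_mono[of "sign_axis v ` I" A] card_image_le[of I "sign_axis v"] by simp
  moreover have "3 \<le> card A"
    using assms by (simp add: cube_vertex_def A_def)
  ultimately have "card I = card (UNIV :: 3 set)"
    using card_mono[of UNIV I] by simp
  then have "I = UNIV"
    by (simp add: card_eq_UNIV_imp_eq_UNIV)
  then have "\<forall>i. \<bar>v $ i\<bar> = c"
    unfolding I_def by blast
  moreover have "3 * c\<^sup>2 + 1 = 2 * b * c"
    using norm_sq_if_abs_components_eq[OF calculation] one_less by (simp add: c_def)
  moreover have "(norm v)\<^sup>2 < 1"
    using assms by (simp add: cube_vertex_def abs_square_less_1)
  then have "3 * c\<^sup>2 < 1"
    using norm_sq_if_abs_components_eq[OF calculation(1)] by simp
  ultimately show ?thesis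
    using vertex_coord_unique by simp
qed

lemma cube_vertex_if_corner:
  assumes "\<forall>i. \<bar>v $ i\<bar> = vertex_coord"
  shows "cube_vertex b v"
proof -
  have "sign_axis v ` UNIV \<subseteq> {e \<in> coords. v \<in> S (b *\<^sub>R e)}"
    using assms by (auto simp: mem_face_iff_corner sign_axis_in_coords inner_sign_axis)
  then have "card (sign_axis v ` UNIV) \<le> card {e \<in> coords. v \<in> S (b *\<^sub>R e)}"
    by (intro card_mono) (auto intro: finite_subset[OF _ finite_coords])
  moreover have "card (sign_axis v ` UNIV) = 3"
    using inj_sign_axis by (simp add: card_image)
  ultimately show ?thesis
    unfolding cube_vertex_def using corner_in_closure_P43[OF assms] corner_in_ball[OF assms] by simp
qed

lemma cube_vertex_iff: "cube_vertex b v \<longleftrightarrow> (\<forall>i. \<bar>v $ i\<bar> = vertex_coord)"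
  using corner_if_cube_vertex cube_vertex_if_corner by blast

lemma norm_diff_cube_edge:
  assumes v: "\<forall>i. \<bar>v $ i\<bar> = vertex_coord" and w: "\<forall>i. \<bar>w $ i\<bar> = vertex_coord" and "v \<noteq> w"
    and e: "e \<in> coords" "e' \<in> coords" "e \<noteq> e'"
    and faces: "e \<bullet> v = vertex_coord" "e \<bullet> w = vertex_coord"
      "e' \<bullet> v = vertex_coord" "e' \<bullet> w = vertex_coord"
  shows "(norm (v - w))\<^sup>2 = 4 * vertex_coord\<^sup>2"
proof -
  obtain i where i: "v $ i = w $ i" "e = axis i 1 \<or> e = - axis i 1"
    using common_face_component[OF e(1)] faces by metis
  obtain j where j: "v $ j = w $ j" "e' = axis j 1 \<or> e' = - axis j 1"
    using common_face_component[OF e(2)] faces by metis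
  have "i \<noteq> j"
  proof
    assume "i = j"
    then have "e' = - e"
      using i(2) j(2) \<open>e \<noteq> e'\<close> by auto
    then show False
      using faces vertex_coord_pos by simp
  qed
  obtain k where k: "v $ k \<noteq> w $ k"
    using \<open>v \<noteq> w\<close> by (auto simp: vec_eq_iff)
  then have "k \<noteq> i" "k \<noteq> j"
    using i(1) j(1) by auto
  have "w $ k = - v $ k"
    using k v[rule_format, of k] w[rule_format, of k] by (auto simp: abs_if split: if_splits)
  moreover have "v $ l = w $ l" if "l \<noteq> k" for l
    using exhaust_3[of i] exhaust_3[of j] exhaust_3[of k] exhaust_3[of l]
      \<open>i \<noteq> j\<close> \<open>k \<noteq> i\<close> \<open>k \<noteq> j\<close> that i(1) j(1) by metis
  ultimately have "v - w = (2 * v $ k) *\<^sub>R axis k 1"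
    by (auto simp: vec_eq_iff axis_def)
  then show ?thesis
    using v power2_abs[of "v $ k"] by (simp add: power_mult_distrib)
qed

lemma hdist_cube_edge:
  assumes "\<forall>i. \<bar>v $ i\<bar> = vertex_coord" "\<forall>i. \<bar>w $ i\<bar> = vertex_coord"
    and "(norm (v - w))\<^sup>2 = 4 * vertex_coord\<^sup>2"
  shows "hdist v w = arcosh (1 + 8 * vertex_coord\<^sup>2 / (1 - 3 * vertex_coord\<^sup>2)\<^sup>2)"
  unfolding hdist_def norm_corner[OF assms(1)] norm_corner[OF assms(2)] assms(3)
  by (simp add: power2_eq_square)

lemma hdist_refl_corner:
  assumes "1 < a" and v: "\<forall>i. \<bar>v $ i\<bar> = vertex_coord"
    and e: "e \<in> coords" "e \<bullet> v = vertex_coord"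
  shows "hdist v (refl (a *\<^sub>R e) v)
    = arcosh (1 + 8 * vertex_coord\<^sup>2 * (b - a)\<^sup>2 / ((a\<^sup>2 - 1) * (1 - 3 * vertex_coord\<^sup>2)\<^sup>2))"
proof -
  have "(norm v)\<^sup>2 + 1 - 2 * ((a *\<^sub>R e) \<bullet> v) = 2 * vertex_coord * (b - a)"
    using e vertex_coord_root by (simp add: norm_corner[OF v] algebra_simps)
  then show ?thesis
    using hdist_refl_self[of "a *\<^sub>R e" v] assms corner_in_ball[OF v]
    by (simp add: norm_coords norm_corner power_mult_distrib mult.assoc)
qed

lemma hdist_lateral_eq_base_iff:
  assumes "1 < a" and v: "\<forall>i. \<bar>v $ i\<bar> = vertex_coord" and w: "\<forall>i. \<bar>w $ i\<bar> = vertex_coord"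
    and edge: "(norm (v - w))\<^sup>2 = 4 * vertex_coord\<^sup>2"
    and e: "e \<in> coords" "e \<bullet> w = vertex_coord"
  shows "hdist v w = hdist w (refl (a *\<^sub>R e) w) \<longleftrightarrow> (b - a)\<^sup>2 = a\<^sup>2 - 1"
proof -
  define Q where "Q = (1 - 3 * vertex_coord\<^sup>2)\<^sup>2"
  define A where "A = a\<^sup>2 - 1"
  have "0 < Q" "0 < A" "vertex_coord \<noteq> 0"
    using vertex_coord_sq_less vertex_coord_pos \<open>1 < a\<close> by (simp_all add: Q_def A_def one_less_power)
  have "hdist v w = hdist w (refl (a *\<^sub>R e) w)
      \<longleftrightarrow> 8 * vertex_coord\<^sup>2 / Q = 8 * vertex_coord\<^sup>2 * (b - a)\<^sup>2 / (A * Q)"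
    unfolding hdist_cube_edge[OF v w edge] hdist_refl_corner[OF \<open>1 < a\<close> w e] Q_def[symmetric] A_def[symmetric]
    using \<open>0 < Q\<close> \<open>0 < A\<close> by (subst arcosh_eq_iff_real) auto
  also have "\<dots> \<longleftrightarrow> (b - a)\<^sup>2 = A"
    using \<open>0 < Q\<close> \<open>0 < A\<close> \<open>vertex_coord \<noteq> 0\<close> by (auto simp: field_simps)
  finally show ?thesis
    unfolding A_def .
qed

lemma cube_edge_exists:
  "\<exists>e\<in>coords. \<exists>e'\<in>coords. \<exists>v w. e' \<noteq> e \<and> cube_vertex b v \<and> cube_vertex b w \<and> v \<noteq> w \<and>
     v \<in> S (b *\<^sub>R e) \<and> w \<in> S (b *\<^sub>R e) \<and> v \<in> S (b *\<^sub>R e') \<and> w \<in> S (b *\<^sub>R e')"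
proof -
  let ?t = vertex_coord
  define v :: pt where "v = (\<chi> i. ?t)"
  define w :: pt where "w = (\<chi> i. if i = 2 then - ?t else ?t)"
  have corners: "\<forall>i. \<bar>v $ i\<bar> = ?t" "\<forall>i. \<bar>w $ i\<bar> = ?t"
    using vertex_coord_pos by (simp_all add: v_def w_def)
  have axes: "axis 1 1 \<in> coords" "axis 3 1 \<in> coords" "axis 3 1 \<noteq> (axis 1 1 :: pt)"
    by (auto simp: coords_iff axis_eq_axis)
  have "v \<noteq> w"
    using vertex_coord_pos by (auto simp: v_def w_def vec_eq_iff)
  moreover have face: "x \<in> S (b *\<^sub>R axis i 1)" if "\<forall>j. \<bar>x $ j\<bar> = ?t" "x $ i = ?t" for x i
    using mem_face_iff_corner[OF that(1), of "axis i 1"] that(2) by (auto simp: coords_iff inner_axis')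
  then have "v \<in> S (b *\<^sub>R axis i 1)" "w \<in> S (b *\<^sub>R axis i 1)" if "i = 1 \<or> i = 3" for i :: 3
    using that corners by (auto simp: v_def w_def)
  ultimately show ?thesis
    using axes corners by (metis cube_vertex_iff)
qed

lemma lateral_faces_square_iff:
  assumes "1 < a"
  shows "lateral_faces_square a b \<longleftrightarrow> (b - a)\<^sup>2 = a\<^sup>2 - 1"
proof
  assume "lateral_faces_square a b"
  obtain e e' v w where e: "e \<in> coords" "e' \<in> coords" "e' \<noteq> e"
    and v: "cube_vertex b v" and w: "cube_vertex b w" and "v \<noteq> w"
    and faces: "v \<in> S (b *\<^sub>R e)" "w \<in> S (b *\<^sub>R e)" "v \<in> S (b *\<^sub>R e')" "w \<in> S (b *\<^sub>R e')"
    using cube_edge_exists by blast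
  then have "hdist v w = hdist w (refl (a *\<^sub>R e) w)"
    using \<open>lateral_faces_square a b\<close> unfolding lateral_faces_square_def Let_def by blast
  moreover note v w
  ultimately show "(b - a)\<^sup>2 = a\<^sup>2 - 1"
    using e faces \<open>v \<noteq> w\<close> hdist_lateral_eq_base_iff[OF \<open>1 < a\<close>] norm_diff_cube_edge
    by (simp add: cube_vertex_iff mem_face_iff_corner)
next
  assume square: "(b - a)\<^sup>2 = a\<^sup>2 - 1"
  show "lateral_faces_square a b"
    unfolding lateral_faces_square_def Let_def
  proof (intro ballI allI impI)
    fix e v w
    assume "e \<in> coords" and edge: "cube_vertex b v \<and> cube_vertex b w \<and> v \<noteq> w \<and>
      v \<in> S (b *\<^sub>R e) \<and> w \<in> S (b *\<^sub>R e) \<and>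
      (\<exists>e'\<in>coords. e' \<noteq> e \<and> v \<in> S (b *\<^sub>R e') \<and> w \<in> S (b *\<^sub>R e'))"
    then obtain e' where e': "e' \<in> coords" "e' \<noteq> e" "v \<in> S (b *\<^sub>R e')" "w \<in> S (b *\<^sub>R e')"
      by blast
    let ?r = "refl (a *\<^sub>R e)"
    have v: "\<forall>i. \<bar>v $ i\<bar> = vertex_coord" and w: "\<forall>i. \<bar>w $ i\<bar> = vertex_coord"
      using edge cube_vertex_iff by blast+
    have faces: "e \<bullet> v = vertex_coord" "e \<bullet> w = vertex_coord"
      "e' \<bullet> v = vertex_coord" "e' \<bullet> w = vertex_coord"
      using edge e' \<open>e \<in> coords\<close> mem_face_iff_corner[OF v] mem_face_iff_corner[OF w] by blast+
    have base: "hdist v w = hdist w (?r w)"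
      using hdist_lateral_eq_base_iff[OF \<open>1 < a\<close> v w _ \<open>e \<in> coords\<close> faces(2)] square
        norm_diff_cube_edge[OF v w _ \<open>e \<in> coords\<close> e'(1)] edge e'(2) faces by auto
    have "norm (a *\<^sub>R e) = a"
      using \<open>1 < a\<close> \<open>e \<in> coords\<close> by (simp add: norm_coords)
    then have top: "hdist (?r w) (?r v) = hdist v w"
      using hdist_refl \<open>1 < a\<close> corner_in_ball[OF v] corner_in_ball[OF w] hdist_commute by metis
    have "hdist (?r v) v = hdist w (?r w)"
      using hdist_commute hdist_refl_corner[OF \<open>1 < a\<close> v \<open>e \<in> coords\<close> faces(1)]
        hdist_refl_corner[OF \<open>1 < a\<close> w \<open>e \<in> coords\<close> faces(2)] by metis
    with base top show "hdist v w = hdist w (?r w) \<and> hdist w (?r w) = hdist (?r w) (?r v) \<and>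
      hdist (?r w) (?r v) = hdist (?r v) v"
      by simp
  qed
qed

end

theorem mainTheorem2:
  fixes n :: nat and a :: real
  assumes "n > 4"
    and "a > sqrt 2"
    and "1 / (a^2 - 1) = cos (2 * pi / real n)"
  shows "\<exists>!b. b > a \<and> b > sqrt 3 \<and> lateral_faces_square a b"
proof -
  \<comment> \<open>The angle condition only determines a; the argument needs nothing beyond a > sqrt 2.\<close>
  have "sqrt 2 < \<bar>a\<bar>"
    using assms(2) abs_ge_self[of a] by linarith
  then have "2 < a\<^sup>2"
    using real_sqrt_less_iff[of 2 "a\<^sup>2"] by simp
  have "(1::real) < sqrt 2"
    by (rule real_less_rsqrt) simp
  then have "1 < a"
    using assms(2) by linarith
  define b0 where "b0 = a + sqrt (a\<^sup>2 - 1)"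
  have "1 < sqrt (a\<^sup>2 - 1)"
    using \<open>2 < a\<^sup>2\<close> by (intro real_less_rsqrt) simp
  moreover have "sqrt 3 < 2"
    using real_sqrt_less_iff[of 3 4] by simp
  ultimately have "a < b0" "sqrt 3 < b0"
    using \<open>1 < a\<close> unfolding b0_def by linarith+
  have square_iff: "lateral_faces_square a b \<longleftrightarrow> b = b0" if "a < b" "sqrt 3 < b" for b
  proof -
    interpret finite_cube b
      using that(2) by unfold_locales
    have "(b - a)\<^sup>2 = a\<^sup>2 - 1 \<longleftrightarrow> b - a = sqrt (a\<^sup>2 - 1)"
      using that(1) \<open>1 < a\<close> by (auto simp: real_sqrt_unique)
    then show ?thesis
      by (simp add: lateral_faces_square_iff[OF \<open>1 < a\<close>] b0_def algebra_simps)
  qed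
  show ?thesis
    using \<open>a < b0\<close> \<open>sqrt 3 < b0\<close> square_iff by blast
qed

end
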